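(* Let $A>0$, $\lambda>0$, $\xi=\sqrt{1-8\lambda}$ (principal branch), and let $(\mathfrak{M}_n)_{n\ge0}$ be defined by $\mathfrak{M}_0=1$ and $\big(\frac{n(n-1)}{2}+\lambda\big)\mathfrak{M}_n+n\mathfrak{M}_{n-1}=\lambda A^n$ for $n\in\mathbb{N}$. Then for every $n\in\mathbb{N}\cup\{0\}$, $$\mathfrak{M}_n=\frac{(-2)^n\,n!}{\big(\tfrac12+\tfrac{\xi}{2}\big)_n\big(\tfrac12-\tfrac{\xi}{2}\big)_n}\sum_{k=0}^{n}\Big(-\tfrac12+\tfrac{\xi}{2}\Big)_k\Big(-\tfrac12-\tfrac{\xi}{2}\Big)_k\frac{1}{k!}\Big(-\frac{A}{2}\Big)^k .$$ In particular $\mathfrak{M}_1=A-1/\lambda$.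
   Context: Pochhammer symbol: $(z)_0=1$, $(z)_n=z(z+1)\cdots(z+n-1)$ for $n\in\mathbb{N}$. The principal branch convention means $\xi\in[0,1)$ if $\lambda\le1/8$ and $\xi$ is purely imaginary if $\lambda>1/8$. *)

theory Defs
  imports "HOL-Analysis.Analysis"
begin

end

theory Submission
  imports Defs
begin

text \<open>The shifted conjugate Pochhammer products are real: since
  \<open>(j + 1/2)\<^sup>2 - \<xi>\<^sup>2/4 = j\<^sup>2 + j + 2\<lambda>\<close>, the denominator of the closed form is a product of positive
  numbers, and one more factor \<open>(-1/2 + \<xi>/2)(-1/2 - \<xi>/2) = 2\<lambda>\<close> links the two Pochhammer pairs.
  Consequently consecutive terms of the closed form differ by exactly the right-hand side of the
  recurrence, and the recurrence, whose leading coefficient never vanishes, has only one solution.\<close>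

definition moment_closed_form :: "complex \<Rightarrow> real \<Rightarrow> nat \<Rightarrow> complex" where
  "moment_closed_form \<xi> A n =
     ((-2) ^ n * fact n / (pochhammer (1/2 + \<xi>/2) n * pochhammer (1/2 - \<xi>/2) n)) *
     (\<Sum>k=0..n. pochhammer (-1/2 + \<xi>/2) k * pochhammer (-1/2 - \<xi>/2) k
                 * (1 / fact k) * (complex_of_real (- A / 2)) ^ k)"

lemma pochhammer_conjugate_product:
  fixes \<xi> :: complex and lam :: real
  assumes "\<xi>\<^sup>2 = of_real (1 - 8 * lam)"
  shows "pochhammer (1/2 + \<xi>/2) n * pochhammer (1/2 - \<xi>/2) n
         = of_real (\<Prod>j<n. real j ^ 2 + real j + 2 * lam)"
proof (induction n)
  case 0
  then show ?case by simp
next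
  case (Suc n)
  have "(1/2 + \<xi>/2 + of_nat n) * (1/2 - \<xi>/2 + of_nat n) = 1/4 - \<xi>\<^sup>2/4 + of_nat n + of_nat n ^ 2"
    by (simp add: algebra_simps power2_eq_square)
  also have "\<dots> = of_real (real n ^ 2 + real n + 2 * lam)"
    using assms by (simp add: field_simps)
  finally have last_factors:
    "(1/2 + \<xi>/2 + of_nat n) * (1/2 - \<xi>/2 + of_nat n) = of_real (real n ^ 2 + real n + 2 * lam)" .
  have "pochhammer (1/2 + \<xi>/2) (Suc n) * pochhammer (1/2 - \<xi>/2) (Suc n)
     = (pochhammer (1/2 + \<xi>/2) n * pochhammer (1/2 - \<xi>/2) n) *
       ((1/2 + \<xi>/2 + of_nat n) * (1/2 - \<xi>/2 + of_nat n))"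
    by (simp add: pochhammer_Suc algebra_simps)
  then show ?case
    using Suc last_factors by simp
qed

lemma pochhammer_conjugate_product_nonzero:
  fixes \<xi> :: complex and lam :: real
  assumes "\<xi>\<^sup>2 = of_real (1 - 8 * lam)" and "lam > 0"
  shows "pochhammer (1/2 + \<xi>/2) n * pochhammer (1/2 - \<xi>/2) n \<noteq> 0"
proof -
  have "(\<Prod>j<n. real j ^ 2 + real j + 2 * lam) > 0"
    using \<open>lam > 0\<close> by (intro prod_pos) (auto intro: add_nonneg_pos)
  then show ?thesis
    unfolding pochhammer_conjugate_product[OF assms(1)] by (metis less_irrefl of_real_eq_0_iff)
qed

lemma recurrence_coefficient_nonzero:
  "(lam::real) > 0 \<Longrightarrow> complex_of_real (real (Suc n) * real n / 2 + lam) \<noteq> 0"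
  by (metis add_nonneg_pos divide_nonneg_pos less_irrefl mult_nonneg_nonneg of_nat_0_le_iff
        of_real_eq_0_iff zero_less_numeral)

lemma pochhammer_conjugate_product_shift:
  fixes \<xi> :: complex and lam :: real
  assumes "\<xi>\<^sup>2 = of_real (1 - 8 * lam)"
  shows "pochhammer (-1/2 + \<xi>/2) (Suc n) * pochhammer (-1/2 - \<xi>/2) (Suc n)
       = 2 * of_real lam * (pochhammer (1/2 + \<xi>/2) n * pochhammer (1/2 - \<xi>/2) n)"
proof -
  have shift: "-1/2 + \<xi>/2 + 1 = 1/2 + \<xi>/2" "-1/2 - \<xi>/2 + 1 = 1/2 - \<xi>/2"
    by simp_all
  have "(-1/2 + \<xi>/2) * (-1/2 - \<xi>/2) = 1/4 - \<xi>\<^sup>2/4"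
    by (simp add: algebra_simps power2_eq_square)
  also have "\<dots> = 2 * of_real lam"
    using assms by (simp add: field_simps)
  finally have first_factors: "(-1/2 + \<xi>/2) * (-1/2 - \<xi>/2) = 2 * of_real lam" .
  show ?thesis
    unfolding pochhammer_rec shift first_factors[symmetric] by (simp only: ac_simps)
qed

lemma recurrence_solution_unique:
  fixes f g :: "nat \<Rightarrow> 'a::field"
  assumes "f 0 = g 0" and "\<And>n. a n \<noteq> 0"
    and "\<And>n. a n * f (Suc n) + b n * f n = r n"
    and "\<And>n. a n * g (Suc n) + b n * g n = r n"
  shows "f n = g n"
proof (induction n)
  case 0
  show ?case using assms(1) .
next
  case (Suc n)
  have "a n * f (Suc n) = a n * g (Suc n)"
    using assms(3,4)[of n] Suc by (metis add_right_cancel)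
  then show ?case using assms(2) by simp
qed

lemma moment_closed_form_0: "moment_closed_form \<xi> A 0 = 1"
  by (simp add: moment_closed_form_def)

lemma moment_closed_form_recurrence:
  fixes \<xi> :: complex and A lam :: real
  assumes "\<xi>\<^sup>2 = of_real (1 - 8 * lam)" and "lam > 0"
  shows "of_real (real (Suc n) * real n / 2 + lam) * moment_closed_form \<xi> A (Suc n)
         + of_nat (Suc n) * moment_closed_form \<xi> A n = of_real (lam * A ^ Suc n)"
proof -
  define P where "P m = pochhammer (1/2 + \<xi>/2) m * pochhammer (1/2 - \<xi>/2) m" for m
  define S where "S m = (\<Sum>k=0..m. pochhammer (-1/2 + \<xi>/2) k * pochhammer (-1/2 - \<xi>/2) k
                        * (1 / fact k) * (complex_of_real (- A / 2)) ^ k)" for m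
  define x where "x = complex_of_real (- A / 2)"
  define c where "c = (-2) ^ n * fact n / P n"
  define \<kappa> where "\<kappa> = complex_of_real (real (Suc n) * real n / 2 + lam)"
  have P_nonzero: "P n \<noteq> 0"
    unfolding P_def using pochhammer_conjugate_product_nonzero[OF assms] .
  have P_Suc: "P (Suc n) = 2 * \<kappa> * P n"
    unfolding P_def \<kappa>_def pochhammer_conjugate_product[OF assms(1)]
    by (simp add: algebra_simps power2_eq_square)
  have fact_Suc: "fact (Suc n) = of_nat (Suc n) * (fact n :: complex)"
    by simp
  have S_Suc: "S (Suc n) - S n = 2 * of_real lam * P n / (of_nat (Suc n) * fact n) * x * x ^ n"
    unfolding S_def P_def x_def
    using pochhammer_conjugate_product_shift[OF assms(1), of n]
    by (simp add: sum.atLeast0_atMost_Suc)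
  have closed: "moment_closed_form \<xi> A m = (-2) ^ m * fact m / P m * S m" for m
    unfolding moment_closed_form_def P_def S_def ..
  have closed_Suc: "\<kappa> * moment_closed_form \<xi> A (Suc n) = - of_nat (Suc n) * c * S (Suc n)"
    unfolding closed P_Suc fact_Suc c_def
    using P_nonzero recurrence_coefficient_nonzero[OF assms(2), of n, folded \<kappa>_def]
    by (simp add: field_simps)
  have "\<kappa> * moment_closed_form \<xi> A (Suc n) + of_nat (Suc n) * moment_closed_form \<xi> A n
        = - of_nat (Suc n) * c * (S (Suc n) - S n)"
    unfolding closed[of n] closed_Suc c_def[symmetric] by (simp add: algebra_simps)
  also have "\<dots> = - 2 * of_real lam * ((-2) ^ n * x ^ n) * x"
    unfolding S_Suc c_def using P_nonzero by (simp add: field_simps del: of_nat_Suc)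
  also have "\<dots> = of_real (lam * A ^ Suc n)"
    unfolding x_def by (simp add: power_mult_distrib[symmetric])
  finally show ?thesis
    unfolding \<kappa>_def .
qed

theorem mainTheorem2:
  fixes A lam :: real and M :: "nat \<Rightarrow> real" and \<xi> :: complex
  assumes "A > 0" and "lam > 0"
    and "\<xi> = csqrt (complex_of_real (1 - 8 * lam))"
    and "M 0 = 1"
    and "\<And>n. n \<ge> 1 \<Longrightarrow>
           (real n * (real n - 1) / 2 + lam) * M n + real n * M (n - 1) = lam * A ^ n"
  shows "(\<forall>n. complex_of_real (M n) =
            ((-2) ^ n * fact n /
              (pochhammer (1/2 + \<xi>/2) n * pochhammer (1/2 - \<xi>/2) n)) *
            (\<Sum>k=0..n. pochhammer (-1/2 + \<xi>/2) k * pochhammer (-1/2 - \<xi>/2) k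
                        * (1 / fact k) * (complex_of_real (- A / 2)) ^ k))
         \<and> M 1 = A - 1 / lam"
proof -
  have \<xi>_sq: "\<xi>\<^sup>2 = of_real (1 - 8 * lam)"
    using assms(3) by simp
  have M_rec: "of_real (real (Suc n) * real n / 2 + lam) * complex_of_real (M (Suc n))
      + of_nat (Suc n) * complex_of_real (M n) = of_real (lam * A ^ Suc n)" for n
    using arg_cong[OF assms(5)[of "Suc n"], of complex_of_real] by simp
  have "complex_of_real (M n) = moment_closed_form \<xi> A n" for n
  proof (rule recurrence_solution_unique[where a = "\<lambda>m. of_real (real (Suc m) * real m / 2 + lam)"
        and b = "\<lambda>m. of_nat (Suc m)" and r = "\<lambda>m. of_real (lam * A ^ Suc m)"])
    show "complex_of_real (M 0) = moment_closed_form \<xi> A 0"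
      using assms(4) by (simp add: moment_closed_form_0)
  qed (use M_rec moment_closed_form_recurrence[OF \<xi>_sq assms(2)]
          recurrence_coefficient_nonzero[OF assms(2)] in auto)
  moreover have "M 1 = A - 1 / lam"
    using assms(5)[of 1] assms(2,4) by (simp add: field_simps)
  ultimately show ?thesis
    unfolding moment_closed_form_def by simp
qed

end
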